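(* Let $h$ be a Hessenberg function on $\{1,\dots,n\}$. For $x^\alpha\in\mathcal{B}_h$, let $\Psi_h(x^\alpha)$ be the Level $n$ word of the $h$-tableau-tree lying directly above the leaf labelled $x^\alpha$. Then $\Psi_h$ is a well-defined map from $\mathcal{B}_h$ to the set of $(h,(n))$-fillings, it sends monomials of degree $r$ to fillings with exactly $r$ dimension pairs, and $\Phi(\Psi_h(x^\alpha))=x^\alpha$ for all $x^\alpha\in\mathcal{B}_h$; more precisely, for every $k\in\{2,\dots,n\}$, $|D^{\Psi_h(x^\alpha)}_k|=\alpha_k$.
   Context: A Hessenberg function is $h:\{1,\dots,n\}\to\{1,\dots,n\}$, $h_i=h(i)$, with $i\le h_i$ and $h_i\le h_{i+1}$; degree tuple $\beta_i=i-\#\{k:h_k<i\}$; $\mathcal{B}_h=\{x_1^{\alpha_1}\cdots x_n^{\alpha_n}:0\le\alpha_i\le\beta_i-1\}$. A word $u_1\cdots u_m$ of distinct numbers is $h$-permissible if $u_t\le h(u_{t+1})$ for all $t$; an $(h,(n))$-filling is an $h$-permissible permutation $T=w_1\cdots w_n$ of $1,\dots,n$ in one row. Dimension pairs of such $T$: $(a,b)$ with $b>a$, $b$ appearing to the left of $a$, and, if $a$ is immediately followed by $c$, $b\le h(c)$. $D^T_k$ is the set of dimension pairs $(a,k)$ and $\Phi(T)=\prod_{k=2}^n x_k^{|D^T_k|}$. The $h$-tableau-tree: Level 1 is the word $1$; a vertex at Level $i-1$ is an $h$-permissible word on $\{1,\dots,i-1\}$ whose $\beta_i$ bullet positions are the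 gaps where inserting $i$ keeps it $h$-permissible; its child along edge $x_i^j$ ($0\le j\le\beta_i-1$) inserts $i$ at the $(j+1)$-th bullet from the right. Each Level $n$ word has one leaf child (edge label $1$) labelled by the product of edge labels on its root path. *)

theory Defs
  imports Main
begin

text \<open>Hessenberg function on {1..n}; values of h outside {1..n} are irrelevant.\<close>
definition hessenberg :: "nat \<Rightarrow> (nat \<Rightarrow> nat) \<Rightarrow> bool" where
  "hessenberg n h \<longleftrightarrow>
     (\<forall>i\<in>{1..n}. i \<le> h i \<and> h i \<le> n) \<and> (\<forall>i\<in>{1..<n}. h i \<le> h (Suc i))"

definition hess_beta :: "nat \<Rightarrow> (nat \<Rightarrow> nat) \<Rightarrow> nat \<Rightarrow> nat" where
  "hess_beta n h i = i - card {k\<in>{1..n}. h k < i}"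

text \<open>Monomials x^alpha in B_h, represented by their exponent vectors alpha
  (alpha i = exponent of x_i, zero outside {1..n}).\<close>
definition hess_basis :: "nat \<Rightarrow> (nat \<Rightarrow> nat) \<Rightarrow> (nat \<Rightarrow> nat) set" where
  "hess_basis n h = {\<alpha>. (\<forall>i\<in>{1..n}. \<alpha> i \<le> hess_beta n h i - 1) \<and> (\<forall>i. i \<notin> {1..n} \<longrightarrow> \<alpha> i = 0)}"

definition permissible :: "(nat \<Rightarrow> nat) \<Rightarrow> nat list \<Rightarrow> bool" where
  "permissible h u \<longleftrightarrow> distinct u \<and> (\<forall>t. Suc t < length u \<longrightarrow> u ! t \<le> h (u ! Suc t))"

definition filling :: "nat \<Rightarrow> (nat \<Rightarrow> nat) \<Rightarrow> nat list \<Rightarrow> bool" where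
  "filling n h w \<longleftrightarrow> permissible h w \<and> set w = {1..n} \<and> length w = n"

definition dim_pairs :: "(nat \<Rightarrow> nat) \<Rightarrow> nat list \<Rightarrow> (nat \<times> nat) set" where
  "dim_pairs h w = {(a,b). \<exists>i j. i < j \<and> j < length w \<and> w ! i = b \<and> w ! j = a \<and> a < b \<and>
                          (Suc j < length w \<longrightarrow> b \<le> h (w ! Suc j))}"

definition dimD :: "(nat \<Rightarrow> nat) \<Rightarrow> nat list \<Rightarrow> nat \<Rightarrow> (nat \<times> nat) set" where
  "dimD h w k = {p\<in>dim_pairs h w. snd p = k}"

text \<open>Phi(T) = prod_{k=2}^n x_k^{|D_k|}, as exponent vector.\<close>
definition Phi :: "nat \<Rightarrow> (nat \<Rightarrow> nat) \<Rightarrow> nat list \<Rightarrow> nat \<Rightarrow> nat" where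
  "Phi n h w k = (if 2 \<le> k \<and> k \<le> n then card (dimD h w k) else 0)"

definition insert_at :: "nat \<Rightarrow> nat \<Rightarrow> nat list \<Rightarrow> nat list" where
  "insert_at p x w = take p w @ x # drop p w"

definition bullets :: "(nat \<Rightarrow> nat) \<Rightarrow> nat \<Rightarrow> nat list \<Rightarrow> nat list" where
  "bullets h i w = filter (\<lambda>p. permissible h (insert_at p i w)) [0..<Suc (length w)]"

text \<open>Child along edge x_i^j: insert i at the (j+1)-th bullet from the right.\<close>
definition tree_child :: "(nat \<Rightarrow> nat) \<Rightarrow> nat \<Rightarrow> nat \<Rightarrow> nat list \<Rightarrow> nat list" where
  "tree_child h i j w = insert_at (rev (bullets h i w) ! j) i w"

text \<open>Word at level k on the root path selected by the edge labels x_i^{alpha_i}.\<close>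
fun tree_word :: "(nat \<Rightarrow> nat) \<Rightarrow> (nat \<Rightarrow> nat) \<Rightarrow> nat \<Rightarrow> nat list" where
  "tree_word h \<alpha> 0 = []"
| "tree_word h \<alpha> (Suc 0) = [1]"
| "tree_word h \<alpha> (Suc (Suc k)) = tree_child h (Suc (Suc k)) (\<alpha> (Suc (Suc k))) (tree_word h \<alpha> (Suc k))"

definition Psi :: "nat \<Rightarrow> (nat \<Rightarrow> nat) \<Rightarrow> (nat \<Rightarrow> nat) \<Rightarrow> nat list" where
  "Psi n h \<alpha> = tree_word h \<alpha> n"

end

theory Submission
  imports Defs
begin

(* The level m word of the h-tableau-tree arises from the level m-1 word w
   by inserting the new largest letter x = m at a bullet gap p.  Everything follows from
   an analysis of one such insertion:
   - gap g of w is a bullet iff g = length w or x <= h (w!g); hence there are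
     1 + #{c <= m-1. m <= h c} = beta_m bullets, and every edge x_m^j with j < beta_m exists;
   - the inserted word is again h-permissible, so each level word is a filling of {1..m};
   - dimension pairs (a,k) with k < x are unaffected: the letters of w keep their relative
     order (position i of w moves to position skip p i), and the only changed neighbour
     relation replaces the follower w!p by x, both admissible for k;
   - dimension pairs (a,x) correspond to the letters right of x whose follower is admissible
     for x, i.e. to the bullets strictly right of p; choosing the (j+1)-th bullet from the
     right therefore produces exactly j of them. *)

section \<open>Inserting a letter into a word\<close>

lemma length_insert_at: "p \<le> length w \<Longrightarrow> length (insert_at p x w) = Suc (length w)"
  by (simp add: insert_at_def)

lemma set_insert_at: "set (insert_at p x w) = insert x (set w)"
proof -
  have "set w = set (take p w) \<union> set (drop p w)"
    by (metis append_take_drop_id set_append)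
  then show ?thesis by (auto simp: insert_at_def)
qed

lemma distinct_insert_at: "distinct (insert_at p x w) \<longleftrightarrow> distinct w \<and> x \<notin> set w"
proof -
  have split: "distinct w = distinct (take p w @ drop p w)" by simp
  have "set w = set (take p w) \<union> set (drop p w)"
    by (metis append_take_drop_id set_append)
  then show ?thesis unfolding insert_at_def split by (auto simp del: append_take_drop_id)
qed

lemma nth_insert_at:
  "p \<le> length w \<Longrightarrow> i < Suc (length w) \<Longrightarrow>
   insert_at p x w ! i = (if i < p then w!i else if i = p then x else w!(i-1))"
  by (auto simp: insert_at_def nth_append nth_Cons' min_def)

text \<open>After inserting a letter at gap p, the letter at position i of the old word sits
  at position skip p i of the new word.\<close>
definition skip :: "nat \<Rightarrow> nat \<Rightarrow> nat" where
  "skip p i = (if i < p then i else Suc i)"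

lemma skip_less_iff: "skip p i < skip p j \<longleftrightarrow> i < j"
  by (simp add: skip_def)

lemma skip_bound: "p \<le> n \<Longrightarrow> skip p i < Suc n \<longleftrightarrow> i < n"
  by (simp add: skip_def)

lemma skip_cases:
  assumes "i \<noteq> p"
  obtains i' where "i = skip p i'"
proof
  show "i = skip p (if i < p then i else i - 1)" using assms by (auto simp: skip_def)
qed

lemma Suc_skip: "Suc j \<noteq> p \<Longrightarrow> Suc (skip p j) = skip p (Suc j)"
  by (simp add: skip_def)

lemma nth_insert_at_skip: "p \<le> length w \<Longrightarrow> i < length w \<Longrightarrow> insert_at p x w ! skip p i = w ! i"
  by (simp add: nth_insert_at skip_def)

lemma nth_insert_at_gap: "p \<le> length w \<Longrightarrow> insert_at p x w ! p = x"
  by (simp add: nth_insert_at)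

section \<open>Permissibility and bullets\<close>

lemma permissible_insert_at:
  assumes perm: "permissible h w" and p: "p \<le> length w" and new: "x \<notin> set w"
    and below: "\<forall>y\<in>set w. y \<le> h x"
  shows "permissible h (insert_at p x w) \<longleftrightarrow> (p < length w \<longrightarrow> x \<le> h (w!p))"
proof
  assume "permissible h (insert_at p x w)"
  then show "p < length w \<longrightarrow> x \<le> h (w!p)"
    using p unfolding permissible_def by (auto simp: length_insert_at nth_insert_at dest: spec[of _ p])
next
  assume front: "p < length w \<longrightarrow> x \<le> h (w!p)"
  let ?v = "insert_at p x w"
  have "?v ! t \<le> h (?v ! Suc t)" if t: "Suc t < Suc (length w)" for t
  proof -
    consider "Suc t < p" | "Suc t = p" | "t = p" | "p < t" by linarith
    then show ?thesis
    proof cases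
      case 1 then show ?thesis using perm p t by (simp add: nth_insert_at permissible_def)
    next
      case 2 then show ?thesis using p below t by (simp add: nth_insert_at)
    next
      case 3 then show ?thesis using p front t by (simp add: nth_insert_at)
    next
      case 4
      have "Suc (t-1) = t" using 4 by simp
      moreover have "w ! (t-1) \<le> h (w ! Suc (t-1))"
        using perm t 4 unfolding permissible_def by (metis Suc_less_SucD calculation)
      ultimately show ?thesis using p 4 t by (simp add: nth_insert_at)
    qed
  qed
  then show "permissible h ?v"
    using perm new p unfolding permissible_def by (simp add: distinct_insert_at length_insert_at)
qed

lemma bullets_eq_filter:
  assumes "permissible h w" "x \<notin> set w" "\<forall>y\<in>set w. y \<le> h x"
  shows "bullets h x w = filter (\<lambda>g. g < length w \<longrightarrow> x \<le> h (w!g)) [0..<Suc (length w)]"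
  unfolding bullets_def using permissible_insert_at[OF assms(1) _ assms(2,3)] by (intro filter_cong) auto

lemma length_filter_nth:
  assumes "distinct w"
  shows "length (filter (\<lambda>g. P (w!g)) [0..<length w]) = card {c\<in>set w. P c}"
proof -
  have "length (filter (\<lambda>g. P (w!g)) [0..<length w]) = card {g. g < length w \<and> P (w!g)}"
    by (simp add: length_filter_conv_card cong: conj_cong)
  also have "\<dots> = card ((\<lambda>g. w!g) ` {g. g < length w \<and> P (w!g)})"
    using assms by (intro card_image[symmetric] inj_onI) (auto simp: nth_eq_iff_index_eq)
  also have "(\<lambda>g. w!g) ` {g. g < length w \<and> P (w!g)} = {c\<in>set w. P c}"
    by (auto simp: in_set_conv_nth)
  finally show ?thesis .
qed

lemma hess_beta_Suc:
  assumes hs: "hessenberg n h" and m: "m < n"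
  shows "hess_beta n h (Suc m) = Suc (card {c\<in>{1..m}. Suc m \<le> h c})"
proof -
  have small: "{k\<in>{1..n}. h k < Suc m} = {c\<in>{1..m}. h c < Suc m}"
    using hs m unfolding hessenberg_def by force
  have "{c\<in>{1..m}. Suc m \<le> h c} \<union> {c\<in>{1..m}. h c < Suc m} = {1..m}"
    and "{c\<in>{1..m}. Suc m \<le> h c} \<inter> {c\<in>{1..m}. h c < Suc m} = {}" by auto
  then have "card {c\<in>{1..m}. Suc m \<le> h c} + card {c\<in>{1..m}. h c < Suc m} = m"
    by (metis card_Un_disjoint card_atLeastAtMost diff_Suc_1 finite_Un finite_atLeastAtMost)
  then show ?thesis unfolding hess_beta_def small by linarith
qed

lemma length_bullets:
  assumes hs: "hessenberg n h" and m: "1 \<le> m" "m < n" and w: "filling m h w"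
  shows "length (bullets h (Suc m) w) = hess_beta n h (Suc m)"
proof -
  have set_w: "set w = {1..m}" and len_w: "length w = m" and d: "distinct w"
    using w unfolding filling_def permissible_def by auto
  have "Suc m \<le> h (Suc m)" using hs m unfolding hessenberg_def by auto
  then have "bullets h (Suc m) w
      = filter (\<lambda>g. g < length w \<longrightarrow> Suc m \<le> h (w!g)) [0..<length w] @ [length w]"
    using bullets_eq_filter[of h w] w set_w unfolding filling_def by auto
  moreover have "filter (\<lambda>g. g < length w \<longrightarrow> Suc m \<le> h (w!g)) [0..<length w]
      = filter (\<lambda>g. Suc m \<le> h (w!g)) [0..<length w]"
    by (rule filter_cong) auto
  ultimately have "length (bullets h (Suc m) w) = Suc (card {c\<in>{1..m}. Suc m \<le> h c})"
    using length_filter_nth[OF d, of "\<lambda>c. Suc m \<le> h c"] set_w by simp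
  then show ?thesis using hess_beta_Suc[OF hs m(2)] by simp
qed

section \<open>Dimension pairs under insertion\<close>

definition follower_ok :: "(nat \<Rightarrow> nat) \<Rightarrow> nat list \<Rightarrow> nat \<Rightarrow> nat \<Rightarrow> bool" where
  "follower_ok h w b j \<longleftrightarrow> (Suc j < length w \<longrightarrow> b \<le> h (w ! Suc j))"

lemma dim_pairs_iff:
  "(a, b) \<in> dim_pairs h w \<longleftrightarrow>
   (\<exists>i j. i < j \<and> j < length w \<and> w!i = b \<and> w!j = a \<and> a < b \<and> follower_ok h w b j)"
  by (simp add: dim_pairs_def follower_ok_def)

lemma follower_ok_insert_at_away:
  assumes p: "p \<le> length w" and "Suc j \<noteq> p"
  shows "follower_ok h (insert_at p x w) b (skip p j) \<longleftrightarrow> follower_ok h w b j"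
  using assms skip_bound[OF p] nth_insert_at_skip[OF p]
  by (simp add: follower_ok_def length_insert_at Suc_skip)

text \<open>If it does, the new follower x and the old follower w!p are both admissible for b
  under the hypotheses below, so again nothing changes.\<close>
lemma follower_ok_insert_at:
  assumes p: "p \<le> length w" and "b \<le> h x" and "p < length w \<longrightarrow> b \<le> h (w!p)"
  shows "follower_ok h (insert_at p x w) b (skip p j) \<longleftrightarrow> follower_ok h w b j"
proof (cases "Suc j = p")
  case True
  then have "skip p j = j" by (simp add: skip_def)
  then show ?thesis using assms True by (simp add: follower_ok_def nth_insert_at_gap)
next
  case False
  then show ?thesis by (rule follower_ok_insert_at_away[OF p])
qed

lemma dimD_insert_at_old:
  assumes p: "p \<le> length w" and kx: "k < x" and khx: "k \<le> h x"
    and front: "p < length w \<longrightarrow> k \<le> h (w!p)"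
  shows "dimD h (insert_at p x w) k = dimD h w k"
proof -
  let ?v = "insert_at p x w"
  note len = length_insert_at[OF p] and bound = skip_bound[OF p]
  note at_skip = nth_insert_at_skip[OF p] and at_gap = nth_insert_at_gap[OF p]
  note follow = follower_ok_insert_at[OF p khx front]
  have "(a, k) \<in> dim_pairs h ?v \<longleftrightarrow> (a, k) \<in> dim_pairs h w" for a
  proof
    assume "(a, k) \<in> dim_pairs h ?v"
    then obtain i j where ij: "i < j" "j < Suc (length w)" "?v!i = k" "?v!j = a" "a < k"
      and f: "follower_ok h ?v k j" unfolding dim_pairs_iff len by blast
    have "i \<noteq> p" "j \<noteq> p" using ij(3-5) kx at_gap by auto
    then obtain i' j' where i': "i = skip p i'" and j': "j = skip p j'" by (meson skip_cases)
    have "i' < j'" "j' < length w" using ij(1,2) bound i' j' by (simp_all add: skip_less_iff)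
    moreover have "w!i' = k" "w!j' = a" using ij(3,4) i' j' at_skip calculation by auto
    moreover have "follower_ok h w k j'" using f j' follow by simp
    ultimately show "(a, k) \<in> dim_pairs h w" using ij(5) unfolding dim_pairs_iff by blast
  next
    assume "(a, k) \<in> dim_pairs h w"
    then obtain i j where ij: "i < j" "j < length w" "w!i = k" "w!j = a" "a < k"
      and f: "follower_ok h w k j" unfolding dim_pairs_iff by blast
    then show "(a, k) \<in> dim_pairs h ?v" unfolding dim_pairs_iff len using follow at_skip bound
      by (intro exI[of _ "skip p i"] exI[of _ "skip p j"]) (simp add: skip_less_iff)
  qed
  then show ?thesis unfolding dimD_def by auto
qed

lemma dimD_insert_at_new:
  assumes p: "p \<le> length w" and large: "\<forall>y\<in>set w. y < x"
  shows "dimD h (insert_at p x w) x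
       = (\<lambda>j. (w!j, x)) ` {j. p \<le> j \<and> j < length w \<and> follower_ok h w x j}"
proof -
  let ?v = "insert_at p x w"
  note len = length_insert_at[OF p] and bound = skip_bound[OF p]
  note at_skip = nth_insert_at_skip[OF p] and at_gap = nth_insert_at_gap[OF p]
  have "(a, x) \<in> dim_pairs h ?v \<longleftrightarrow>
        (\<exists>j. p \<le> j \<and> j < length w \<and> follower_ok h w x j \<and> a = w!j)" for a
  proof
    assume "(a, x) \<in> dim_pairs h ?v"
    then obtain i j where ij: "i < j" "j < Suc (length w)" "?v!i = x" "?v!j = a" "a < x"
      and f: "follower_ok h ?v x j" unfolding dim_pairs_iff len by blast
    have "i = p"
    proof (rule ccontr)
      assume "i \<noteq> p"
      then obtain i' where i': "i = skip p i'" by (rule skip_cases)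
      then have "i' < length w" using ij(1,2) bound by (metis less_trans)
      then show False using ij(3) i' at_skip large by fastforce
    qed
    then have "j \<noteq> p" using ij(1) by simp
    then obtain j' where j': "j = skip p j'" by (rule skip_cases)
    have "p \<le> j'" using ij(1) \<open>i = p\<close> j' by (auto simp: skip_def split: if_splits)
    moreover have "j' < length w" using ij(2) bound j' by simp
    moreover have "a = w!j'" using ij(4) j' at_skip calculation by simp
    moreover have "follower_ok h w x j'"
      using f j' follower_ok_insert_at_away[OF p] \<open>p \<le> j'\<close> by simp
    ultimately show "\<exists>j. p \<le> j \<and> j < length w \<and> follower_ok h w x j \<and> a = w!j" by blast
  next
    assume "\<exists>j. p \<le> j \<and> j < length w \<and> follower_ok h w x j \<and> a = w!j"
    then obtain j where j: "p \<le> j" "j < length w" "follower_ok h w x j" "a = w!j" by blast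
    have "p < skip p j" "skip p j < Suc (length w)" using j(1,2) bound by (auto simp: skip_def)
    moreover have "?v ! skip p j = a" "a < x" using j(2,4) at_skip large by auto
    moreover have "follower_ok h ?v x (skip p j)" using j follower_ok_insert_at_away[OF p] by simp
    ultimately show "(a, x) \<in> dim_pairs h ?v" unfolding dim_pairs_iff len using at_gap by blast
  qed
  then show ?thesis unfolding dimD_def by auto
qed

section \<open>One edge of the tableau-tree\<close>

lemma card_greater_sorted:
  "sorted_wrt (<) (xs::nat list) \<Longrightarrow> i < length xs \<Longrightarrow> card {g\<in>set xs. xs!i < g} = length xs - Suc i"
proof (induction xs arbitrary: i)
  case Nil then show ?case by simp
next
  case (Cons a ys)
  show ?case
  proof (cases i)
    case 0
    have "{g\<in>set (a#ys). (a#ys)!i < g} = set ys" using Cons.prems 0 by auto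
    moreover have "distinct ys" using Cons.prems(1) strict_sorted_iff by auto
    ultimately show ?thesis using 0 by (simp add: distinct_card)
  next
    case (Suc i')
    have "a < ys ! i'" using Cons.prems Suc by simp
    then have "{g\<in>set (a#ys). (a#ys)!i < g} = {g\<in>set ys. ys!i' < g}" using Suc by auto
    then show ?thesis using Cons Suc by simp
  qed
qed

locale tree_edge =
  fixes h :: "nat \<Rightarrow> nat" and x :: nat and j :: nat and w :: "nat list"
  assumes perm: "permissible h w" and large: "\<forall>y\<in>set w. y < x" and hx: "x \<le> h x"
    and edge: "j < length (bullets h x w)"
begin

definition gap :: nat where "gap = rev (bullets h x w) ! j"

lemma child_eq: "tree_child h x j w = insert_at gap x w"
  by (simp add: tree_child_def gap_def)

lemma fresh: "x \<notin> set w" and below: "\<forall>y\<in>set w. y \<le> h x"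
  using large hx by force+

lemma mem_bullets: "g \<in> set (bullets h x w) \<longleftrightarrow> g \<le> length w \<and> (g < length w \<longrightarrow> x \<le> h (w!g))"
  by (auto simp: bullets_eq_filter[OF perm fresh below])

lemma gap_bullet: "gap \<le> length w" "gap < length w \<longrightarrow> x \<le> h (w!gap)"
proof -
  have "gap \<in> set (bullets h x w)" unfolding gap_def using edge by (simp add: rev_nth)
  then show "gap \<le> length w" "gap < length w \<longrightarrow> x \<le> h (w!gap)" by (simp_all add: mem_bullets)
qed

lemma permissible_child: "permissible h (tree_child h x j w)"
  using permissible_insert_at[OF perm gap_bullet(1) fresh below] gap_bullet(2) by (simp add: child_eq)

lemma dimD_child_old:
  assumes "k < x"
  shows "dimD h (tree_child h x j w) k = dimD h w k"
proof -
  have "k \<le> h x" "gap < length w \<longrightarrow> k \<le> h (w!gap)" using gap_bullet(2) hx assms by auto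
  then show ?thesis using dimD_insert_at_old[OF gap_bullet(1) assms] by (simp add: child_eq)
qed

text \<open>The dimension pairs of x correspond to the j bullets strictly right of the chosen one.\<close>
lemma card_dimD_child_new: "card (dimD h (tree_child h x j w) x) = j"
proof -
  let ?bs = "bullets h x w"
  let ?J = "{i. gap \<le> i \<and> i < length w \<and> follower_ok h w x i}"
  have "distinct w" using perm unfolding permissible_def by simp
  then have "card (dimD h (tree_child h x j w) x) = card ?J"
    unfolding child_eq dimD_insert_at_new[OF gap_bullet(1) large]
    by (intro card_image inj_onI) (auto simp: nth_eq_iff_index_eq)
  also have "\<dots> = card (Suc ` ?J)" by (simp add: card_image)
  also have "Suc ` ?J = {g\<in>set ?bs. ?bs ! (length ?bs - Suc j) < g}"
  proof -
    have "gap = ?bs ! (length ?bs - Suc j)" unfolding gap_def using edge by (simp add: rev_nth)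
    moreover have "Suc ` ?J = {g\<in>set ?bs. gap < g}"
    proof (rule set_eqI)
      fix g
      have "g \<in> Suc ` ?J \<longleftrightarrow> (\<exists>i. g = Suc i \<and> i \<in> ?J)" by blast
      also have "\<dots> \<longleftrightarrow> g \<in> {g\<in>set ?bs. gap < g}"
        by (cases g) (auto simp: mem_bullets follower_ok_def)
      finally show "g \<in> Suc ` ?J \<longleftrightarrow> g \<in> {g\<in>set ?bs. gap < g}" .
    qed
    ultimately show ?thesis by simp
  qed
  also have "card \<dots> = j"
  proof -
    have "sorted_wrt (<) ?bs"
      unfolding bullets_eq_filter[OF perm fresh below] by (intro sorted_wrt_filter sorted_wrt_upt)
    then show ?thesis using card_greater_sorted[of ?bs "length ?bs - Suc j"] edge by simp
  qed
  finally show ?thesis .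
qed

end

section \<open>The root path of a monomial\<close>

lemma tree_word_Suc:
  "1 \<le> m \<Longrightarrow> tree_word h \<alpha> (Suc m) = tree_child h (Suc m) (\<alpha> (Suc m)) (tree_word h \<alpha> m)"
  by (cases m) auto

lemma tree_word_invariant:
  assumes hs: "hessenberg n h" and al: "\<alpha> \<in> hess_basis n h" and m: "1 \<le> m" "m \<le> n"
  shows "filling m h (tree_word h \<alpha> m) \<and> (\<forall>k\<in>{2..m}. card (dimD h (tree_word h \<alpha> m) k) = \<alpha> k)"
  using m
proof (induction m rule: nat_induct_at_least)
  case base then show ?case by (simp add: filling_def permissible_def)
next
  case (Suc m)
  let ?w = "tree_word h \<alpha> m"
  have IH: "filling m h ?w" "\<forall>k\<in>{2..m}. card (dimD h ?w k) = \<alpha> k" using Suc by auto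
  have "\<alpha> (Suc m) \<le> hess_beta n h (Suc m) - 1" using al Suc.prems unfolding hess_basis_def by auto
  moreover have "1 \<le> hess_beta n h (Suc m)" using hess_beta_Suc[OF hs] Suc.prems by simp
  ultimately have "\<alpha> (Suc m) < length (bullets h (Suc m) ?w)"
    using length_bullets[OF hs Suc.hyps _ IH(1)] Suc.prems by simp
  then interpret e: tree_edge h "Suc m" "\<alpha> (Suc m)" ?w
    using IH(1) hs Suc unfolding filling_def hessenberg_def by unfold_locales auto
  have "filling (Suc m) h (tree_word h \<alpha> (Suc m))"
    using e.permissible_child e.gap_bullet(1) IH(1) Suc.hyps
    by (simp add: tree_word_Suc filling_def e.child_eq set_insert_at length_insert_at atLeastAtMostSuc_conv)
  moreover have "card (dimD h (tree_word h \<alpha> (Suc m)) k) = \<alpha> k" if "k \<in> {2..Suc m}" for k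
    using that IH(2) e.dimD_child_old e.card_dimD_child_new Suc.hyps
    by (cases "k = Suc m") (auto simp: tree_word_Suc)
  ultimately show ?case by blast
qed

text \<open>In a filling of {1..n} every dimension pair (a,b) has 2 <= b <= n, so the dimension
  pairs split into the sets D_2, ..., D_n.\<close>
lemma card_dim_pairs_filling:
  assumes w: "filling n h w"
  shows "card (dim_pairs h w) = (\<Sum>k\<in>{2..n}. card (dimD h w k))"
proof -
  have "dim_pairs h w \<subseteq> set w \<times> set w" unfolding dim_pairs_def by (auto intro: nth_mem)
  then have "finite (dim_pairs h w)" by (rule finite_subset) simp
  then have fin: "finite (dimD h w k)" for k unfolding dimD_def by simp
  have "dim_pairs h w \<subseteq> (\<Union>k\<in>{2..n}. dimD h w k)"
  proof
    fix q assume q: "q \<in> dim_pairs h w"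
    then obtain a b i j where ab: "q = (a,b)" "i < j" "j < length w" "w!i = b" "w!j = a" "a < b"
      unfolding dim_pairs_def by blast
    then have "a \<in> {1..n}" "b \<in> {1..n}" using w unfolding filling_def by (metis nth_mem order.strict_trans)+
    then show "q \<in> (\<Union>k\<in>{2..n}. dimD h w k)" using q ab unfolding dimD_def by auto
  qed
  then have "dim_pairs h w = (\<Union>k\<in>{2..n}. dimD h w k)" unfolding dimD_def by auto
  then show ?thesis
    by (simp only:) (rule card_UN_disjoint, simp_all add: fin, auto simp: dimD_def)
qed

text \<open>Exponents of monomials in B_h vanish outside {2..n} (beta_1 = 1).\<close>
lemma hess_basis_vanishes:
  assumes "\<alpha> \<in> hess_basis n h" and "k \<notin> {2..n}"
  shows "\<alpha> k = 0"
proof (cases "k = 1 \<and> 1 \<le> n")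
  case True
  then have "\<alpha> 1 \<le> hess_beta n h 1 - 1" using assms(1) unfolding hess_basis_def by auto
  moreover have "hess_beta n h 1 \<le> 1" unfolding hess_beta_def by simp
  ultimately show ?thesis using True by simp
next
  case False
  then show ?thesis using assms unfolding hess_basis_def by auto
qed

theorem mainTheorem17:
  fixes n :: nat and h :: "nat \<Rightarrow> nat" and \<alpha> :: "nat \<Rightarrow> nat"
  assumes "1 \<le> n" and "hessenberg n h" and "\<alpha> \<in> hess_basis n h"
  shows "(\<forall>i\<in>{2..n}. length (bullets h i (tree_word h \<alpha> (i - 1))) = hess_beta n h i)
    \<and> filling n h (Psi n h \<alpha>)
    \<and> card (dim_pairs h (Psi n h \<alpha>)) = (\<Sum>i\<in>{1..n}. \<alpha> i)
    \<and> Phi n h (Psi n h \<alpha>) = \<alpha>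
    \<and> (\<forall>k\<in>{2..n}. card (dimD h (Psi n h \<alpha>) k) = \<alpha> k)"
proof -
  note inv = tree_word_invariant[OF assms(2,3)]
  let ?W = "Psi n h \<alpha>"
  have W: "filling n h ?W" "\<forall>k\<in>{2..n}. card (dimD h ?W k) = \<alpha> k"
    using inv[of n] assms(1) unfolding Psi_def by auto
  have degrees: "length (bullets h i (tree_word h \<alpha> (i - 1))) = hess_beta n h i" if "i \<in> {2..n}" for i
  proof -
    define m where "m = i - 1"
    have m: "i = Suc m" "1 \<le> m" "m < n" using that unfolding m_def by auto
    then show ?thesis using length_bullets[OF assms(2) m(2,3)] inv[of m] by simp
  qed
  have "Phi n h ?W = \<alpha>"
    using W(2) hess_basis_vanishes[OF assms(3)] unfolding Phi_def by fastforce
  moreover have "card (dim_pairs h ?W) = (\<Sum>i\<in>{1..n}. \<alpha> i)"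
  proof -
    have "{1..n} = insert 1 {2..n}" using assms(1) by auto
    then show ?thesis using card_dim_pairs_filling[OF W(1)] W(2) hess_basis_vanishes[OF assms(3), of 1]
      by simp
  qed
  ultimately show ?thesis using degrees W by blast
qed

end
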